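(* Let $X$ be a topological space and let $U$ be an ultrafilter on $\omega$. If $\varphi:Y_U\rightarrow \mathcal{F}(X)$ is lower semicontinuous and $\sup_{n<\omega}|\varphi(n)|<\omega$, then $\varphi$ has a continuous selection, i.e., there is a continuous $s:Y_U\rightarrow X$ with $s(y)\in\varphi(y)$ for all $y\in Y_U$.
   Context: $\mathcal{F}(X)$ denotes the set of nonempty closed subsets of $X$. A map $\varphi:Y\rightarrow\mathcal{F}(X)$ is lower semicontinuous if for every open $W\subseteq X$ the set $\{y\in Y:\varphi(y)\cap W\neq\emptyset\}$ is open in $Y$. For a filter $F$ on $\omega$, $Y_F$ is the space with underlying set $\omega\cup\{\infty\}$ in which each point of $\omega$ is isolated and the neighborhoods of $\infty$ are the sets $A\cup\{\infty\}$ with $A\in F$. *)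

theory Defs
  imports "HOL-Analysis.Analysis"
begin

definition ultrafilter_on_nat :: "nat set set \<Rightarrow> bool" where
  "ultrafilter_on_nat U \<longleftrightarrow>
     UNIV \<in> U \<and> {} \<notin> U \<and>
     (\<forall>A B. A \<in> U \<and> A \<subseteq> B \<longrightarrow> B \<in> U) \<and>
     (\<forall>A B. A \<in> U \<and> B \<in> U \<longrightarrow> A \<inter> B \<in> U) \<and>
     (\<forall>A. A \<in> U \<or> - A \<in> U)"

text \<open>The space Y_F on nat option: Some n are the points of omega (isolated),
  None is the point infinity, whose neighbourhoods are A \<union> {infinity} with A \<in> F.\<close>
definition Y_top :: "nat set set \<Rightarrow> nat option topology" where
  "Y_top F = topology (\<lambda>S. None \<in> S \<longrightarrow> {n. Some n \<in> S} \<in> F)"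

definition closed_nonempty_sets :: "'a topology \<Rightarrow> 'a set set" where
  "closed_nonempty_sets X = {C. closedin X C \<and> C \<noteq> {}}"

definition lower_semicontinuous_setmap ::
  "'b topology \<Rightarrow> 'a topology \<Rightarrow> ('b \<Rightarrow> 'a set) \<Rightarrow> bool" where
  "lower_semicontinuous_setmap Y X \<phi> \<longleftrightarrow>
     (\<forall>W. openin X W \<longrightarrow> openin Y {y \<in> topspace Y. \<phi> y \<inter> W \<noteq> {}})"

lemma istopology_Y_top:
  assumes "\<forall>A B. A \<in> F \<and> A \<subseteq> B \<longrightarrow> B \<in> F"
      and "\<forall>A B. A \<in> F \<and> B \<in> F \<longrightarrow> A \<inter> B \<in> F"
  shows "istopology (\<lambda>S. None \<in> S \<longrightarrow> {n. Some n \<in> S} \<in> F)"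
  unfolding istopology_def
proof (intro conjI allI impI)
  fix S T assume H: "None \<in> S \<longrightarrow> {n. Some n \<in> S} \<in> F" "None \<in> T \<longrightarrow> {n. Some n \<in> T} \<in> F"
    and N: "None \<in> S \<inter> T"
  have "{n. Some n \<in> S \<inter> T} = {n. Some n \<in> S} \<inter> {n. Some n \<in> T}" by blast
  then show "{n. Some n \<in> S \<inter> T} \<in> F" using H N assms(2) by auto
next
  fix K assume K: "\<forall>S\<in>K. None \<in> S \<longrightarrow> {n. Some n \<in> S} \<in> F" and N: "None \<in> \<Union>K"
  then obtain S where "S \<in> K" "None \<in> S" by blast
  then have "{n. Some n \<in> S} \<in> F" using K by blast
  moreover have "{n. Some n \<in> S} \<subseteq> {n. Some n \<in> \<Union>K}" using \<open>S \<in> K\<close> by blast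
  ultimately show "{n. Some n \<in> \<Union>K} \<in> F" using assms(1) by blast
qed

end

theory Submission
  imports Defs
begin

text \<open>Enumerate every \<open>\<phi>(n)\<close> as \<open>g n 0, \<dots>, g n (k - 1)\<close> and fix \<open>x \<in> \<phi>(\<infinity>)\<close>. Continuity of
  a map on \<open>Y\<^sub>U\<close> only concerns the point \<open>\<infinity>\<close>: it means that the map converges to its value
  at \<open>\<infinity>\<close> along \<open>U\<close>. Some column \<open>g \<cdot> i\<close> converges to \<open>x\<close> along \<open>U\<close>: otherwise each column
  avoids, for \<open>U\<close>-almost all \<open>n\<close>, some neighbourhood \<open>W\<^sub>i\<close> of \<open>x\<close>, and then so does every column
  for the neighbourhood \<open>W = \<Inter>\<^sub>i W\<^sub>i\<close>, because an ultrafilter containing a finite union contains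
  one of its members. This contradicts lower semicontinuity at \<open>\<infinity>\<close>, which says that
  \<open>\<phi>(n)\<close> meets \<open>W\<close> for \<open>U\<close>-almost all \<open>n\<close>. The selection is \<open>x\<close> at \<open>\<infinity>\<close> and \<open>g n i\<close> at \<open>n\<close>.\<close>

lemma ultrafilter_on_natD:
  assumes "ultrafilter_on_nat U"
  shows ultrafilter_on_nat_empty: "{} \<notin> U"
    and ultrafilter_on_nat_mono: "A \<in> U \<Longrightarrow> A \<subseteq> B \<Longrightarrow> B \<in> U"
    and ultrafilter_on_nat_Int: "A \<in> U \<Longrightarrow> B \<in> U \<Longrightarrow> A \<inter> B \<in> U"
    and ultrafilter_on_nat_Compl: "A \<notin> U \<Longrightarrow> - A \<in> U"
  using assms unfolding ultrafilter_on_nat_def by blast+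

lemma ultrafilter_on_nat_Un:
  assumes U: "ultrafilter_on_nat U" and "A \<union> B \<in> U"
  shows "A \<in> U \<or> B \<in> U"
proof (rule ccontr)
  assume "\<not> ?thesis"
  then have "- A \<inter> - B \<inter> (A \<union> B) \<in> U"
    using assms by (simp add: ultrafilter_on_nat_Compl ultrafilter_on_nat_Int)
  then show False using ultrafilter_on_nat_empty[OF U] by (simp add: Int_Un_distrib)
qed

lemma ultrafilter_on_nat_finite_UN:
  assumes U: "ultrafilter_on_nat U" and "finite I" and "(\<Union>i\<in>I. A i) \<in> U"
  shows "\<exists>i\<in>I. A i \<in> U"
  using \<open>finite I\<close> \<open>(\<Union>i\<in>I. A i) \<in> U\<close>
proof (induction I rule: finite_induct)
  case empty
  then show ?case using ultrafilter_on_nat_empty[OF U] by simp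
next
  case (insert j I)
  then have "A j \<in> U \<or> (\<Union>i\<in>I. A i) \<in> U" using ultrafilter_on_nat_Un[OF U] by simp
  then show ?case using insert.IH by blast
qed

lemma openin_Y_top:
  assumes "ultrafilter_on_nat U"
  shows "openin (Y_top U) S \<longleftrightarrow> (None \<in> S \<longrightarrow> {n. Some n \<in> S} \<in> U)"
proof -
  have "istopology (\<lambda>S. None \<in> S \<longrightarrow> {n. Some n \<in> S} \<in> U)"
    using assms istopology_Y_top unfolding ultrafilter_on_nat_def by blast
  then show ?thesis unfolding Y_top_def by (simp add: topology_inverse')
qed

lemma topspace_Y_top:
  assumes "ultrafilter_on_nat U"
  shows "topspace (Y_top U) = UNIV"
  using assms openin_subset[of "Y_top U" UNIV]
  by (auto simp: openin_Y_top ultrafilter_on_nat_def)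

lemma continuous_map_Y_top_iff:
  assumes "ultrafilter_on_nat U"
  shows "continuous_map (Y_top U) X s \<longleftrightarrow>
    range s \<subseteq> topspace X \<and>
    (\<forall>W. openin X W \<and> s None \<in> W \<longrightarrow> {n. s (Some n) \<in> W} \<in> U)"
  unfolding continuous_map openin_Y_top[OF assms] topspace_Y_top[OF assms] by auto

lemma lower_semicontinuous_setmap_Y_top_at_None:
  assumes "ultrafilter_on_nat U" and "lower_semicontinuous_setmap (Y_top U) X \<phi>"
    and "openin X W" and "\<phi> None \<inter> W \<noteq> {}"
  shows "{n. \<phi> (Some n) \<inter> W \<noteq> {}} \<in> U"
  using assms unfolding lower_semicontinuous_setmap_def
  by (auto simp: openin_Y_top topspace_Y_top)

lemma finite_set_eq_image_lessThan:
  assumes "finite A" and "A \<noteq> {}" and "card A \<le> k"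
  obtains f :: "nat \<Rightarrow> 'a" where "f ` {..<k} = A"
proof -
  obtain h where h: "bij_betw h {..<card A} A"
    using assms(1) ex_bij_betw_nat_finite lessThan_atLeast0 by metis
  obtain a where "a \<in> A" using assms(2) by blast
  define f where "f i = (if i < card A then h i else a)" for i
  have hA: "h ` {..<card A} = A" using h by (simp add: bij_betw_def)
  have "f ` {..<k} \<subseteq> A"
    using hA \<open>a \<in> A\<close> unfolding f_def by auto
  moreover have "A \<subseteq> f ` {..<k}"
  proof
    fix y assume "y \<in> A"
    then obtain i where "i < card A" "y = h i" using hA by auto
    then have "f i = y" and "i < k" using \<open>card A \<le> k\<close> unfolding f_def by auto
    then show "y \<in> f ` {..<k}" by blast
  qed
  ultimately show thesis by (intro that) blast
qed

lemma ultrafilter_on_nat_convergent_column: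
  fixes g :: "nat \<Rightarrow> nat \<Rightarrow> 'a"
  assumes U: "ultrafilter_on_nat U" and x: "x \<in> topspace X"
    and meets: "\<And>W. openin X W \<Longrightarrow> x \<in> W \<Longrightarrow> {n. \<exists>i<k. g n i \<in> W} \<in> U"
  shows "\<exists>i<k. \<forall>W. openin X W \<and> x \<in> W \<longrightarrow> {n. g n i \<in> W} \<in> U"
proof (rule ccontr)
  assume "\<not> ?thesis"
  then have "\<forall>i\<in>{..<k}. \<exists>V. openin X V \<and> x \<in> V \<and> {n. g n i \<in> V} \<notin> U" by auto
  then obtain V where V: "\<forall>i\<in>{..<k}. openin X (V i) \<and> x \<in> V i \<and> {n. g n i \<in> V i} \<notin> U"
    by (metis bchoice)
  define W where "W = (\<Inter>i<k. V i) \<inter> topspace X"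
  have "openin X W" unfolding W_def using V by (intro openin_INT) auto
  moreover have "x \<in> W" unfolding W_def using V x by blast
  ultimately have "{n. \<exists>i<k. g n i \<in> W} \<in> U" by (rule meets)
  moreover have "{n. \<exists>i<k. g n i \<in> W} \<subseteq> (\<Union>i<k. {n. g n i \<in> V i})"
    unfolding W_def by blast
  ultimately have "(\<Union>i<k. {n. g n i \<in> V i}) \<in> U"
    by (rule ultrafilter_on_nat_mono[OF U])
  then obtain i where "i < k" "{n. g n i \<in> V i} \<in> U"
    using ultrafilter_on_nat_finite_UN[OF U finite_lessThan] by blast
  with V show False by blast
qed

theorem mainTheorem1:
  fixes X :: "'a topology" and U :: "nat set set" and \<phi> :: "nat option \<Rightarrow> 'a set"
  assumes "ultrafilter_on_nat U"
    and "\<forall>y. \<phi> y \<in> closed_nonempty_sets X"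
    and "lower_semicontinuous_setmap (Y_top U) X \<phi>"
    and "\<exists>k::nat. \<forall>n. finite (\<phi> (Some n)) \<and> card (\<phi> (Some n)) \<le> k"
  shows "\<exists>s. continuous_map (Y_top U) X s \<and> (\<forall>y. s y \<in> \<phi> y)"
proof -
  have \<phi>: "\<phi> y \<noteq> {}" "\<phi> y \<subseteq> topspace X" for y
    using assms(2) closedin_subset unfolding closed_nonempty_sets_def by auto
  obtain k where k: "\<And>n. finite (\<phi> (Some n))" "\<And>n. card (\<phi> (Some n)) \<le> k"
    using assms(4) by blast
  have "\<exists>f. f ` {..<k} = \<phi> (Some n)" for n
    using finite_set_eq_image_lessThan[OF k(1) \<phi>(1) k(2)] by metis
  then obtain g where g: "\<And>n. g n ` {..<k} = \<phi> (Some n)" by metis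
  obtain x where x: "x \<in> \<phi> None" using \<phi>(1) by blast
  have meets: "{n. \<exists>i<k. g n i \<in> W} \<in> U" if "openin X W" "x \<in> W" for W
  proof -
    have "\<phi> None \<inter> W \<noteq> {}" using x that(2) by blast
    then have "{n. \<phi> (Some n) \<inter> W \<noteq> {}} \<in> U"
      by (rule lower_semicontinuous_setmap_Y_top_at_None[OF assms(1,3) that(1)])
    moreover have "{n. \<phi> (Some n) \<inter> W \<noteq> {}} = {n. \<exists>i<k. g n i \<in> W}"
      unfolding g[symmetric] by blast
    ultimately show ?thesis by simp
  qed
  have "x \<in> topspace X" using x \<phi>(2) by blast
  from ultrafilter_on_nat_convergent_column[OF assms(1) this meets]
  obtain i where i: "i < k" "\<forall>W. openin X W \<and> x \<in> W \<longrightarrow> {n. g n i \<in> W} \<in> U"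
    by blast
  define s where "s y = (case y of None \<Rightarrow> x | Some n \<Rightarrow> g n i)" for y
  have s: "s y \<in> \<phi> y" for y
  proof (cases y)
    case (Some n)
    then show ?thesis using g[of n] \<open>i < k\<close> by (auto simp: s_def)
  qed (simp add: s_def x)
  have "continuous_map (Y_top U) X s"
    unfolding continuous_map_Y_top_iff[OF assms(1)] using s \<phi>(2) i(2) by (auto simp: s_def)
  with s show ?thesis by blast
qed

end
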